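(* Let $\alpha_1,\alpha_2,\alpha_3>0$, $\lambda_1,\lambda_2,\lambda_3\ge0$ with $\lambda^+=\lambda_1+\lambda_2+\lambda_3>0$, $\alpha^+=\alpha_1+\alpha_2+\alpha_3$, and $(X'_1,X'_2)\sim\mathrm{NcDir}^2(\alpha_1,\alpha_2,\alpha_3,\lambda_1,\lambda_2,\lambda_3)$. Writing $x=\lambda^+/2$, $\mu_i=\lambda_i/2$, one has $$ \mathbb E(X'_1X'_2)=\frac{\alpha_1\alpha_2}{(\alpha^+)_2}e^{-x}\,{}_1F_1(\alpha^+;\alpha^++2;x)+\frac{1}{\alpha^++2}\Big[\frac{\alpha_1\mu_2+\alpha_2\mu_1}{\alpha^++1}-\frac{\mu_1\mu_2}{\alpha^++1+x}\Big]e^{-x}\,{}_1F_1(\alpha^++1;\alpha^++3;x)+\frac{\mu_1\mu_2}{x(\alpha^++1+x)}\Big[1-e^{-x}\,{}_1F_1(\alpha^++1;\alpha^++3;x)\Big]. $$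
   Context: $(a)_l=\Gamma(a+l)/\Gamma(a)$ is the Pochhammer symbol; ${}_1F_1(a;b;x)=\sum_{i\ge0}\frac{(a)_i}{(b)_i}\frac{x^i}{i!}$ is Kummer's confluent hypergeometric function. $\mathrm{NcDir}^2(\alpha_1,\alpha_2,\alpha_3,\lambda_1,\lambda_2,\lambda_3)$ is the law of $(Y'_1/Y'^+,Y'_2/Y'^+)$ where $Y'_i\sim\chi'^2_{2\alpha_i}(\lambda_i)$, $i=1,2,3$, are independent non-central chi-squared variables and $Y'^+=Y'_1+Y'_2+Y'_3$. *)

theory Defs
  imports "HOL-Probability.Probability"
begin

text \<open>Density of the central chi-squared law with 2a degrees of freedom
  (Gamma law with shape a and scale 2).\<close>
definition chi2_density :: "real \<Rightarrow> real \<Rightarrow> real" where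
  "chi2_density a y =
     (if y > 0 then y powr (a - 1) * exp (- y / 2) / (2 powr a * Gamma a) else 0)"

definition ncchi2_density :: "real \<Rightarrow> real \<Rightarrow> real \<Rightarrow> real" where
  "ncchi2_density a l y =
     (\<Sum>j. exp (- l / 2) * (l / 2) ^ j / fact j * chi2_density (a + real j) y)"

definition ncchi2 :: "real \<Rightarrow> real \<Rightarrow> real measure" where
  "ncchi2 a l = density lborel (\<lambda>y. ennreal (ncchi2_density a l y))"

definition hyp1F1 :: "real \<Rightarrow> real \<Rightarrow> real \<Rightarrow> real" where
  "hyp1F1 a b x = (\<Sum>i. pochhammer a i / pochhammer b i * x ^ i / fact i)"

definition NcDir2 :: "real \<Rightarrow> real \<Rightarrow> real \<Rightarrow> real \<Rightarrow> real \<Rightarrow> real \<Rightarrow> (real \<times> real) measure" where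
  "NcDir2 a1 a2 a3 l1 l2 l3 =
     distr (Pi\<^sub>M {0::nat, 1, 2} (\<lambda>i. ncchi2 ([a1, a2, a3] ! i) ([l1, l2, l3] ! i)))
           borel
           (\<lambda>y. (y 0 / (y 0 + y 1 + y 2), y 1 / (y 0 + y 1 + y 2)))"

end

theory Submission
  imports Defs "HOL-Real_Asymp.Real_Asymp"
begin

(* With S = Y'1 + Y'2 + Y'3, the identity 1/S^2 = \<integral> t e^(-tS) dt over t > 0, Tonelli's theorem and
   independence give E(X'1 X'2) = \<integral> t L1(t) L2(t) L3(t) dt, where L1, L2 are E(Y' e^(-tY')) and L3 is
   E(e^(-tY')) for the three factors; these are explicit because a non-central chi-squared law is a
   Poisson mixture of Gamma laws. Expanding the integrand in powers of x/(1+2t) and integrating termwise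
   with \<integral> t (1+2t)^(-(d+2)) dt = 1/(4d(d+1)) leaves a series in x^n/n! whose coefficients are
   rational in n: two of its parts are Kummer functions 1F1(a; a+2; x), with a = \<alpha>\<^sup>+ and a = \<alpha>\<^sup>+ + 1,
   and the third reduces to the second by a contiguous relation. *)


section \<open>Power series\<close>

lemma sums_exp_real: "(\<lambda>n. z ^ n / fact n) sums exp (z::real)"
  using exp_converges[of z] by (simp add: divide_inverse mult.commute)

lemma sums_of_nat_mult_shift:
  fixes x s :: real
  assumes "(\<lambda>n. g n * (x ^ n / fact n)) sums s"
  shows "(\<lambda>k. real k * g (k - 1) * (x ^ k / fact k)) sums (x * s)"
proof -
  have "real (Suc n) * g n * (x ^ Suc n / fact (Suc n)) = x * (g n * (x ^ n / fact n))" for n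
    by (simp add: field_simps del: of_nat_Suc)
  then have "(\<lambda>n. real (Suc n) * g (Suc n - 1) * (x ^ Suc n / fact (Suc n))) sums (x * s)"
    using sums_mult[OF assms, of x] by (simp add: ac_simps)
  then show ?thesis by (subst (asm) sums_Suc_iff) simp
qed

lemma sums_affine_mult_exp: "(\<lambda>n. (a + real n) * (z ^ n / fact n)) sums ((a + z) * exp (z::real))"
proof -
  have "(\<lambda>n. real n * 1 * (z ^ n / fact n)) sums (z * exp z)"
    using sums_of_nat_mult_shift[of "\<lambda>_. 1"] sums_exp_real by simp
  from sums_add[OF sums_mult[OF sums_exp_real[of z], of a] this] show ?thesis
    by (simp add: distrib_right add_divide_distrib)
qed

lemma summable_power_div_fact_pochhammer:
  fixes a z :: real
  assumes a: "a > 0" and z: "z \<ge> 0"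
  shows "summable (\<lambda>n. z ^ n / (fact n * pochhammer a n))"
proof (rule summable_comparison_test)
  show "summable (\<lambda>n. (z / a) ^ n / fact n)"
    using sums_summable[OF sums_exp_real] .
  have "a ^ n \<le> pochhammer a n" for n
    using a by (induction n) (auto simp: pochhammer_rec' intro!: mult_mono pochhammer_nonneg)
  then show "\<exists>N. \<forall>n\<ge>N. norm (z ^ n / (fact n * pochhammer a n)) \<le> (z / a) ^ n / fact n"
    using a z by (auto simp: power_divide pochhammer_pos abs_of_pos field_simps intro!: mult_right_mono)
qed

lemma ennreal_suminf_sums:
  fixes f :: "nat \<Rightarrow> real"
  assumes "\<And>n. 0 \<le> f n" "f sums s"
  shows "(\<Sum>n. ennreal (f n)) = ennreal s"
  using suminf_ennreal2[OF assms(1) sums_summable[OF assms(2)]] sums_unique[OF assms(2)] by simp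

lemma ennreal_lincomb3:
  fixes a b c u v w :: real
  assumes "0 \<le> a" "0 \<le> b" "0 \<le> c" "0 \<le> u" "0 \<le> v" "0 \<le> w"
  shows "ennreal (a * u + b * v + c * w) = ennreal a * ennreal u + ennreal b * ennreal v + ennreal c * ennreal w"
  using assms by (simp add: ennreal_plus ennreal_mult)

lemma powr_minus_add_of_nat:
  fixes w b :: real
  assumes "w > 0"
  shows "w powr (-(b + real j)) = w powr (-b) * inverse w ^ j"
  unfolding powr_minus using assms by (simp add: powr_add powr_realpow power_inverse)

section \<open>Gamma-type integrals\<close>

lemma nn_integral_powr_mult_exp:
  fixes c s :: real
  assumes c: "c > 0" and s: "s > 0"
  shows "(\<integral>\<^sup>+y. ennreal (y powr (c - 1) * exp (-(s*y))) * indicator {0..} y \<partial>lborel)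
          = ennreal (Gamma c / s powr c)"
proof -
  let ?I = "\<integral>\<^sup>+y. ennreal (y powr (c - 1) * exp (-(s*y))) * indicator {0..} y \<partial>lborel"
  have "ennreal (Gamma c) = (\<integral>\<^sup>+u. ennreal (u powr (c - 1) / exp u) * indicator {0..} u \<partial>lborel)"
    by (rule nn_integral_has_integral_lebesgue'[OF _ Gamma_integral_real[OF c], symmetric]) auto
  also have "\<dots> = ennreal s * (\<integral>\<^sup>+y. ennreal ((s*y) powr (c - 1) / exp (s*y)) * indicator {0..} (s*y) \<partial>lborel)"
    using nn_integral_real_affine[of "\<lambda>u. ennreal (u powr (c - 1) / exp u) * indicator {0..} u" s 0] s
    by simp
  also have "(\<lambda>y. ennreal ((s*y) powr (c - 1) / exp (s*y)) * indicator {0..} (s*y))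
       = (\<lambda>y. ennreal (s powr (c - 1)) * (ennreal (y powr (c - 1) * exp (-(s*y))) * indicator {0..} y))"
    using s by (auto simp: indicator_def zero_le_mult_iff ennreal_mult[symmetric] powr_mult exp_minus field_simps)
  also have "ennreal s * (\<integral>\<^sup>+y. ennreal (s powr (c - 1)) * (ennreal (y powr (c - 1) * exp (-(s*y))) * indicator {0..} y) \<partial>lborel)
      = ennreal (s powr c) * ?I"
    using s by (subst nn_integral_cmult) (auto simp: mult.assoc[symmetric] ennreal_mult[symmetric] powr_mult_base)
  finally have "ennreal (s powr c) * ?I = ennreal (s powr c) * ennreal (Gamma c / s powr c)"
    using s c by (simp add: ennreal_mult[symmetric] Gamma_real_pos less_imp_le)
  then show ?thesis using s by (subst (asm) ennreal_mult_cancel_left) auto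
qed

lemma nn_integral_mult_exp:
  fixes S :: real
  assumes S: "S > 0"
  shows "(\<integral>\<^sup>+t. ennreal (t * exp (-(t*S))) * indicator {0..} t \<partial>lborel) = ennreal (1 / S^2)"
proof -
  let ?F = "\<lambda>t. -(t/S + 1/S^2) * exp (-(t*S))"
  have "(\<integral>\<^sup>+t. ennreal (t * exp (-(t*S))) * indicator {0..} t \<partial>lborel) = ennreal (0 - ?F 0)"
  proof (rule nn_integral_FTC_atLeast)
    show "DERIV ?F t :> t * exp (-(t*S))" for t
      using S by (auto intro!: derivative_eq_intros simp: field_simps power2_eq_square)
    show "(?F \<longlongrightarrow> 0) at_top" using S by real_asymp
  qed auto
  then show ?thesis by simp
qed

lemma nn_integral_t_mult_powr:
  fixes d :: real
  assumes d: "d > 0"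
  shows "(\<integral>\<^sup>+t. ennreal (t * (1 + 2*t) powr (-(d + 2))) * indicator {0..} t \<partial>lborel)
       = ennreal (1 / (4 * (d * (d + 1))))"
proof -
  let ?F = "\<lambda>t. (1 + 2*t) powr (-(d + 1)) / (4*(d + 1)) - (1 + 2*t) powr (-d) / (4*d)"
  have "(\<integral>\<^sup>+t. ennreal (t * (1 + 2*t) powr (-(d + 2))) * indicator {0..} t \<partial>lborel) = ennreal (0 - ?F 0)"
  proof (rule nn_integral_FTC_atLeast)
    show "DERIV ?F t :> t * (1 + 2*t) powr (-(d + 2))" if "0 \<le> t" for t
    proof -
      have w: "1 + 2*t > 0" using that by simp
      have e1: "-(d + 1) - 1 = -(d + 2)" and e2: "-d - 1 = 1 + (-(d + 2))" by simp_all
      have "DERIV ?F t :> (-(d+1)) * (1 + 2*t) powr (-(d + 1) - 1) * 2 / (4*(d + 1))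
                         - (-d) * (1 + 2*t) powr (-d - 1) * 2 / (4*d)"
        using w d by (auto intro!: derivative_eq_intros)
      moreover have "(-(d+1)) * (1 + 2*t) powr (-(d + 1) - 1) * 2 / (4*(d + 1))
                     - (-d) * (1 + 2*t) powr (-d - 1) * 2 / (4*d) = t * (1 + 2*t) powr (-(d + 2))"
        unfolding e1 e2 powr_add using w d by (simp add: field_simps add_nonneg_eq_0_iff)
      ultimately show ?thesis by simp
    qed
    show "(?F \<longlongrightarrow> 0) at_top" using d by real_asymp
  qed auto
  also have "0 - ?F 0 = 1 / (4 * (d * (d + 1)))"
    using d by (simp add: field_simps add_nonneg_eq_0_iff)
  finally show ?thesis .
qed

section \<open>Non-central chi-squared laws\<close>

lemma chi2_density_nonneg: "b > 0 \<Longrightarrow> 0 \<le> chi2_density b y"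
  by (auto simp: chi2_density_def Gamma_real_pos intro!: divide_nonneg_nonneg)

lemma borel_measurable_chi2_density[measurable]: "chi2_density b \<in> borel_measurable borel"
  unfolding chi2_density_def by measurable

lemma nn_integral_chi2_density_moment:
  fixes b t :: real
  assumes b: "b > 0" and t: "t \<ge> 0"
  shows "(\<integral>\<^sup>+y. ennreal (chi2_density b y * (y ^ k * exp (-(t*y)))) \<partial>lborel)
       = ennreal (Gamma (b + k) / Gamma b * 2 ^ k * (1 + 2*t) powr (-(b + k)))"
proof -
  let ?s = "1/2 + t"
  have "ennreal (chi2_density b y * (y ^ k * exp (-(t*y))))
     = ennreal (1 / (2 powr b * Gamma b)) * (ennreal (y powr ((b + k) - 1) * exp (-(?s*y))) * indicator {0..} y)"
    for y
  proof (cases "y > 0")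
    case True
    have "y powr (b - 1) * y ^ k = y powr ((b + k) - 1)"
      using True by (simp add: powr_realpow[symmetric] powr_add[symmetric] algebra_simps)
    moreover have "exp (- y / 2) * exp (-(t*y)) = exp (-(?s*y))"
      by (simp add: exp_add[symmetric] algebra_simps)
    ultimately show ?thesis
      using True b unfolding chi2_density_def
      by (simp add: ennreal_mult[symmetric] Gamma_real_pos less_imp_le field_simps)
  next
    case False
    then show ?thesis by (cases "y = 0") (auto simp: chi2_density_def)
  qed
  then have "(\<integral>\<^sup>+y. ennreal (chi2_density b y * (y ^ k * exp (-(t*y)))) \<partial>lborel)
     = ennreal (1 / (2 powr b * Gamma b)) * ennreal (Gamma (b + k) / ?s powr (b + k))"
    using b t by (simp add: nn_integral_cmult nn_integral_powr_mult_exp)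
  also have "\<dots> = ennreal (Gamma (b + k) / Gamma b * 2 ^ k * (1 + 2*t) powr (-(b + k)))"
  proof -
    have "?s = (1 + 2*t) / 2" and w: "1 + 2*t > 0" using t by simp_all
    then have "1 / (2 powr b * Gamma b) * (Gamma (b + k) / ?s powr (b + k))
        = Gamma (b + k) / Gamma b * 2 ^ k * (1 + 2*t) powr (-(b + k))"
      unfolding powr_minus_add_of_nat[OF w]
      using b t by (simp add: powr_divide powr_add powr_minus powr_realpow field_simps)
    then show ?thesis using b t
      by (simp add: ennreal_mult[symmetric] Gamma_real_pos less_imp_le)
  qed
  finally show ?thesis .
qed

lemma summable_ncchi2_terms:
  fixes a l y :: real
  assumes a: "a > 0" and l: "l \<ge> 0"
  shows "summable (\<lambda>j. exp (- l / 2) * (l / 2) ^ j / fact j * chi2_density (a + real j) y)"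
proof (cases "y > 0")
  case False
  then show ?thesis by (simp add: chi2_density_def)
next
  case True
  let ?K = "exp (- l / 2) * (y powr (a - 1) * exp (- y / 2) / (2 powr a * Gamma a))"
  have "exp (- l / 2) * (l / 2) ^ j / fact j * chi2_density (a + real j) y
     = ?K * ((l/2 * (y/2)) ^ j / (fact j * pochhammer a j))" for j
  proof -
    have "a \<notin> \<int>\<^sub>\<le>\<^sub>0" using a nonpos_Ints_nonpos by fastforce
    then have "Gamma (a + real j) = Gamma a * pochhammer a j"
      using Gamma_real_pos[OF a] by (simp add: pochhammer_Gamma field_simps)
    moreover have "y powr (a + real j - 1) = y powr (a - 1) * y ^ j"
      using True by (simp add: powr_realpow[symmetric] powr_add[symmetric] algebra_simps)
    moreover have "(2::real) ^ j * 2 ^ j = 4 ^ j"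
      by (simp add: power_mult_distrib[symmetric])
    ultimately show ?thesis using True a unfolding chi2_density_def
      by (simp add: powr_add powr_realpow power_mult_distrib power_divide Gamma_real_pos field_simps)
  qed
  moreover have "summable (\<lambda>j. ?K * ((l/2 * (y/2)) ^ j / (fact j * pochhammer a j)))"
    using summable_power_div_fact_pochhammer[OF a] l True by (intro summable_mult) simp
  ultimately show ?thesis by simp
qed

lemma ncchi2_term_nonneg:
  "a > 0 \<Longrightarrow> l \<ge> 0 \<Longrightarrow> 0 \<le> exp (- l / 2) * (l / 2) ^ j / fact j * chi2_density (a + real j) y"
  by (simp add: chi2_density_nonneg add_pos_nonneg)

lemma borel_measurable_ncchi2_density[measurable]:
  "(\<lambda>y. ennreal (ncchi2_density a l y)) \<in> borel_measurable borel"
  unfolding ncchi2_density_def by measurable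

lemma sets_ncchi2[measurable_cong]: "sets (ncchi2 a l) = sets borel"
  by (simp add: ncchi2_def)

lemma ennreal_ncchi2_density_eq_suminf:
  assumes a: "a > 0" and l: "l \<ge> 0"
  shows "ennreal (ncchi2_density a l u)
       = (\<Sum>j. ennreal (exp (- l / 2) * (l / 2) ^ j / fact j) * ennreal (chi2_density (a + real j) u))"
  unfolding ncchi2_density_def
  using suminf_ennreal2[OF ncchi2_term_nonneg[OF a l, of _ u] summable_ncchi2_terms[OF a l, of u]] a l
  by (simp add: ennreal_mult[symmetric] chi2_density_nonneg add_pos_nonneg)

lemma nn_integral_ncchi2_moment:
  fixes a l t :: real
  assumes a: "a > 0" and l: "l \<ge> 0" and t: "t \<ge> 0"
  shows "(\<integral>\<^sup>+u. ennreal (u ^ k * exp (-(t*u))) \<partial>ncchi2 a l)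
     = (\<Sum>j. ennreal (exp (- l / 2) * 2 ^ k * (1 + 2*t) powr (-(a + k)) *
          (pochhammer (a + real j) k * ((l / 2 / (1 + 2*t)) ^ j / fact j))))"
proof -
  let ?w = "\<lambda>j. exp (- l / 2) * (l / 2) ^ j / fact j"
  have "ennreal (ncchi2_density a l u) * ennreal (u ^ k * exp (-(t*u)))
      = (\<Sum>j. ennreal (?w j) * ennreal (chi2_density (a + real j) u * (u ^ k * exp (-(t*u)))))" for u
    using a by (simp add: ennreal_ncchi2_density_eq_suminf[OF a l] ennreal_mult' chi2_density_nonneg
                          add_pos_nonneg mult.assoc ennreal_suminf_multc[symmetric] del: ennreal_suminf_multc)
  then have "(\<integral>\<^sup>+u. ennreal (u ^ k * exp (-(t*u))) \<partial>ncchi2 a l)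
      = (\<Sum>j. ennreal (?w j) * (\<integral>\<^sup>+u. ennreal (chi2_density (a + real j) u * (u ^ k * exp (-(t*u)))) \<partial>lborel))"
    unfolding ncchi2_def by (simp add: nn_integral_density nn_integral_suminf nn_integral_cmult)
  also have "\<dots> = (\<Sum>j. ennreal (?w j * (Gamma (a + real j + k) / Gamma (a + real j) * 2 ^ k
                                         * (1 + 2*t) powr (-(a + real j + k)))))"
    using a t l by (simp add: nn_integral_chi2_density_moment add_pos_nonneg ennreal_mult[symmetric] Gamma_real_pos)
  also have "\<dots> = (\<Sum>j. ennreal (exp (- l / 2) * 2 ^ k * (1 + 2*t) powr (-(a + k)) *
          (pochhammer (a + real j) k * ((l / 2 / (1 + 2*t)) ^ j / fact j))))"
  proof (rule suminf_cong)
    fix j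
    have "a + real j \<notin> \<int>\<^sub>\<le>\<^sub>0" using a nonpos_Ints_nonpos by fastforce
    then have "Gamma (a + real j + k) / Gamma (a + real j) = pochhammer (a + real j) k"
      by (simp add: pochhammer_Gamma)
    moreover have "(1 + 2*t) powr (-(a + real j + k)) = (1 + 2*t) powr (-(a + k)) * inverse (1 + 2*t) ^ j"
      using t powr_minus_add_of_nat[of "1 + 2*t" "a + k" j] by (simp add: algebra_simps)
    moreover have "(l / 2 / (1 + 2*t)) ^ j = (l / 2) ^ j * inverse (1 + 2*t) ^ j"
      by (simp only: divide_inverse[of "l / 2"] power_mult_distrib)
    moreover have "E * L / F * (P * K * (W * I)) = E * K * W * (P * (L * I / F))" for E L F P K W I :: real
      by (simp add: divide_inverse mult_ac)
    ultimately show "ennreal (?w j * (Gamma (a + real j + k) / Gamma (a + real j) * 2 ^ k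
                                         * (1 + 2*t) powr (-(a + real j + k))))
        = ennreal (exp (- l / 2) * 2 ^ k * (1 + 2*t) powr (-(a + k)) *
          (pochhammer (a + real j) k * ((l / 2 / (1 + 2*t)) ^ j / fact j)))"
      by (simp only:)
  qed
  finally show ?thesis .
qed

definition ncchi2_laplace :: "real \<Rightarrow> real \<Rightarrow> real \<Rightarrow> real" where
  "ncchi2_laplace a l t = exp (- l / 2) * (1 + 2*t) powr (-a) * exp (l / 2 / (1 + 2*t))"

definition ncchi2_laplace_moment :: "real \<Rightarrow> real \<Rightarrow> real \<Rightarrow> real" where
  "ncchi2_laplace_moment a l t =
     2 * exp (- l / 2) * (1 + 2*t) powr (-(a + 1)) * ((a + l / 2 / (1 + 2*t)) * exp (l / 2 / (1 + 2*t)))"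

lemma nn_integral_ncchi2_exp:
  assumes a: "a > 0" and l: "l \<ge> 0" and t: "t \<ge> 0"
  shows "(\<integral>\<^sup>+u. ennreal (exp (-(t*u))) \<partial>ncchi2 a l) = ennreal (ncchi2_laplace a l t)"
proof -
  let ?z = "l / 2 / (1 + 2*t)"
  have "(\<lambda>j. exp (- l / 2) * 2 ^ 0 * (1 + 2*t) powr (-(a + real 0)) *
          (pochhammer (a + real j) 0 * (?z ^ j / fact j))) sums ncchi2_laplace a l t"
    using sums_mult[OF sums_exp_real[of ?z], of "exp (- l / 2) * (1 + 2*t) powr (-a)"]
    unfolding ncchi2_laplace_def by simp
  moreover have "(\<integral>\<^sup>+u. ennreal (exp (-(t*u))) \<partial>ncchi2 a l) = (\<integral>\<^sup>+u. ennreal (u ^ 0 * exp (-(t*u))) \<partial>ncchi2 a l)"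
    by simp
  ultimately show ?thesis
    unfolding nn_integral_ncchi2_moment[OF a l t] using l t
    by (auto intro!: ennreal_suminf_sums)
qed

lemma nn_integral_ncchi2_mult_exp:
  assumes a: "a > 0" and l: "l \<ge> 0" and t: "t \<ge> 0"
  shows "(\<integral>\<^sup>+u. ennreal (u * exp (-(t*u))) \<partial>ncchi2 a l) = ennreal (ncchi2_laplace_moment a l t)"
proof -
  let ?z = "l / 2 / (1 + 2*t)"
  have "(\<lambda>j. exp (- l / 2) * 2 ^ 1 * (1 + 2*t) powr (-(a + real 1)) *
          (pochhammer (a + real j) 1 * (?z ^ j / fact j))) sums ncchi2_laplace_moment a l t"
    using sums_mult[OF sums_affine_mult_exp[of a ?z], of "2 * exp (- l / 2) * (1 + 2*t) powr (-(a + 1))"]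
    unfolding ncchi2_laplace_moment_def by (simp add: mult_ac)
  moreover have "(\<integral>\<^sup>+u. ennreal (u * exp (-(t*u))) \<partial>ncchi2 a l) = (\<integral>\<^sup>+u. ennreal (u ^ 1 * exp (-(t*u))) \<partial>ncchi2 a l)"
    by simp
  ultimately show ?thesis
    unfolding nn_integral_ncchi2_moment[OF a l t] using a l t
    by (auto intro!: ennreal_suminf_sums)
qed

lemma prob_space_ncchi2: "a > 0 \<Longrightarrow> l \<ge> 0 \<Longrightarrow> prob_space (ncchi2 a l)"
  using nn_integral_ncchi2_exp[of a l 0]
  by (intro prob_spaceI) (simp add: ncchi2_def emeasure_density ncchi2_laplace_def exp_add[symmetric])

lemma sigma_finite_ncchi2: "sigma_finite_measure (ncchi2 a l)"
  unfolding ncchi2_def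
  by (subst sigma_finite_measure.sigma_finite_iff_density_finite[OF sigma_finite_lborel]) auto

lemma AE_ncchi2_pos: "AE u in ncchi2 a l. u > 0"
  unfolding ncchi2_def
proof (subst AE_density)
  show "AE u in lborel. 0 < ennreal (ncchi2_density a l u) \<longrightarrow> 0 < u"
    by (intro AE_I2 impI, rule ccontr) (simp add: ncchi2_density_def chi2_density_def)
qed simp

section \<open>Kummer series\<close>

lemma pochhammer_div_pochhammer_add2:
  fixes a :: real
  assumes a: "a > 0"
  shows "pochhammer a n / pochhammer (a + 2) n = a * (a + 1) / ((a + n) * (a + n + 1))"
proof -
  have "pochhammer a (Suc (Suc n)) = a * (a + 1) * pochhammer (a + 2) n"
    by (simp add: pochhammer_rec algebra_simps)
  moreover have "pochhammer a (Suc (Suc n)) = (a + n + 1) * (a + n) * pochhammer a n"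
    by (simp add: pochhammer_rec' algebra_simps)
  moreover have "pochhammer (a + 2) n > 0" "(a + n) * (a + n + 1) > 0"
    using a by (simp_all add: pochhammer_pos add_pos_nonneg)
  ultimately show ?thesis by (simp add: field_simps)
qed

lemma sums_hyp1F1_add2:
  fixes a x :: real
  assumes a: "a > 0" and x: "x \<ge> 0"
  shows "(\<lambda>n. 1 / ((a + n) * (a + n + 1)) * (x ^ n / fact n)) sums (hyp1F1 a (a + 2) x / (a * (a + 1)))"
proof -
  let ?t = "\<lambda>n. 1 / ((a + n) * (a + n + 1)) * (x ^ n / fact n)"
  have "summable ?t"
  proof (rule summable_comparison_test)
    have "norm (?t n) \<le> 1 / (a * (a + 1)) * (x ^ n / fact n)" for n
    proof -
      have "0 \<le> ?t n" using a x by (simp add: add_pos_nonneg)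
      then have "norm (?t n) = ?t n" by (simp only: real_norm_def abs_of_nonneg)
      also have "\<dots> \<le> 1 / (a * (a + 1)) * (x ^ n / fact n)"
        using a x by (intro mult_right_mono divide_left_mono mult_mono) auto
      finally show ?thesis .
    qed
    then show "\<exists>N. \<forall>n\<ge>N. norm (?t n) \<le> 1 / (a * (a + 1)) * (x ^ n / fact n)"
      by blast
    show "summable (\<lambda>n. 1 / (a * (a + 1)) * (x ^ n / fact n))"
      by (intro summable_mult sums_summable[OF sums_exp_real])
  qed
  then have "(\<lambda>n. a * (a + 1) * ?t n) sums (a * (a + 1) * suminf ?t)"
    by (intro sums_mult summable_sums)
  moreover have "a * (a + 1) * ?t n = pochhammer a n / pochhammer (a + 2) n * x ^ n / fact n" for n
    using pochhammer_div_pochhammer_add2[OF a, of n] by simp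
  ultimately have "hyp1F1 a (a + 2) x = a * (a + 1) * suminf ?t"
    unfolding hyp1F1_def by (simp add: sums_iff)
  then show ?thesis using a \<open>summable ?t\<close> by (simp add: summable_sums)
qed

lemma contiguity_coefficients:
  fixes c :: real
  assumes c: "c > 0"
  defines "P1 \<equiv> \<lambda>n::nat. 1 / ((c + real n) * (c + real n + 1))"
    and "P2 \<equiv> \<lambda>n::nat. 1 / ((c + real n + 1) * (c + real n + 2))"
  shows "c * (real k * P2 (k - 1)) + real k * (real (k - 1) * P2 (k - 1 - 1))
         + c * (real k * P1 (k - 1)) + c * (c + 1) * P1 k = 1"
proof (cases k)
  case 0
  then show ?thesis unfolding P1_def using c by simp
next
  case (Suc j)
  have pos: "c + real j > 0" "c + real j + 1 > 0" "(c + j) * (c + j + 1) > 0" "(c + j + 1) * (c + j + 2) > 0"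
    using c by simp_all
  have P: "P2 j = 1 / ((c + j + 1) * (c + j + 2))" "P1 (Suc j) = 1 / ((c + j + 1) * (c + j + 2))"
    "P1 j = 1 / ((c + j) * (c + j + 1))"
    by (simp_all add: Suc P1_def P2_def algebra_simps)
  have "real k * (real (k - 1) * P2 (k - 1 - 1)) = (real j + 1) * real j / ((c + j) * (c + j + 1))"
    using Suc by (cases j) (simp_all add: P2_def algebra_simps)
  moreover have "c * (real k * P2 (k - 1)) + c * (c + 1) * P1 k
      = (c * (c + j + 2)) / ((c + j + 1) * (c + j + 2))"
    unfolding Suc diff_Suc_1 P by (simp add: add_divide_distrib[symmetric] algebra_simps)
  moreover have "(real j + 1) * real j / ((c + j) * (c + j + 1)) + c * (real k * P1 (k - 1))
      = ((real j + 1) * (c + j)) / ((c + j + 1) * (c + j))"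
    unfolding Suc diff_Suc_1 P by (simp add: add_divide_distrib[symmetric] algebra_simps)
  moreover have "(c * (c + j + 2)) / ((c + j + 1) * (c + j + 2)) = c / (c + j + 1)"
    "((real j + 1) * (c + j)) / ((c + j + 1) * (c + j)) = (real j + 1) / (c + j + 1)"
    using pos by simp_all
  moreover have "c / (c + j + 1) + (real j + 1) / (c + j + 1) = 1"
    using pos by (simp add: field_simps)
  ultimately show ?thesis by linarith
qed

lemma sums_hyp1F1_contiguous:
  fixes c x :: real
  assumes c: "c > 0" and x: "x > 0"
  shows "(\<lambda>n. 1 / ((c + real n + 1) * (c + real n + 2)) * (x ^ n / fact n)) sums
           ((exp x - hyp1F1 c (c + 2) x - x * hyp1F1 c (c + 2) x / (c + 1)) / (x * (c + x)))"
proof -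
  define F where "F = hyp1F1 c (c + 2) x"
  define P1 where "P1 = (\<lambda>n::nat. 1 / ((c + real n) * (c + real n + 1)))"
  define P2 where "P2 = (\<lambda>n::nat. 1 / ((c + real n + 1) * (c + real n + 2)))"
  let ?e = "\<lambda>k. x ^ k / fact k"
  have sF: "(\<lambda>n. P1 n * ?e n) sums (F / (c * (c + 1)))"
    unfolding P1_def F_def using c x by (intro sums_hyp1F1_add2) auto
  have "(\<lambda>n. 1 / ((c + 1 + real n) * (c + 1 + real n + 1)) * ?e n) sums
          (hyp1F1 (c + 1) (c + 1 + 2) x / ((c + 1) * (c + 1 + 1)))"
    using c x by (intro sums_hyp1F1_add2) auto
  then obtain U where sU: "(\<lambda>n. P2 n * ?e n) sums U"
    unfolding P2_def by (auto simp: algebra_simps)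
  have s1: "(\<lambda>k. real k * P2 (k - 1) * ?e k) sums (x * U)"
    by (rule sums_of_nat_mult_shift[OF sU])
  have s2: "(\<lambda>k. real k * (real (k - 1) * P2 (k - 1 - 1)) * ?e k) sums (x * (x * U))"
    by (rule sums_of_nat_mult_shift[OF s1])
  have s3: "(\<lambda>k. real k * P1 (k - 1) * ?e k) sums (x * (F / (c * (c + 1))))"
    by (rule sums_of_nat_mult_shift[OF sF])
  \<comment> \<open>Coefficientwise, this is the identity (c + x) x U + (1 + x / (c + 1)) F = exp x.\<close>
  have "(\<lambda>k. c * (real k * P2 (k - 1) * ?e k) + real k * (real (k - 1) * P2 (k - 1 - 1)) * ?e k
            + c * (real k * P1 (k - 1) * ?e k) + c * (c + 1) * (P1 k * ?e k))
        sums (c * (x * U) + x * (x * U) + c * (x * (F / (c * (c + 1)))) + c * (c + 1) * (F / (c * (c + 1))))"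
    by (intro sums_add sums_mult s1 s2 s3 sF)
  moreover have "c * (real k * P2 (k - 1) * ?e k) + real k * (real (k - 1) * P2 (k - 1 - 1)) * ?e k
            + c * (real k * P1 (k - 1) * ?e k) + c * (c + 1) * (P1 k * ?e k) = ?e k" for k
    using contiguity_coefficients[OF c, of k] unfolding P1_def P2_def
    by (simp only: distrib_right[symmetric] mult.assoc[symmetric] mult_1_left)
  ultimately have "?e sums (c * (x * U) + x * (x * U) + c * (x * (F / (c * (c + 1))))
                               + c * (c + 1) * (F / (c * (c + 1))))"
    by (simp only:)
  then have "c * (x * U) + x * (x * U) + c * (x * (F / (c * (c + 1)))) + c * (c + 1) * (F / (c * (c + 1)))
      = exp x"
    using sums_unique2 sums_exp_real by blast
  moreover have "c * (x * (F / (c * (c + 1)))) = x * F / (c + 1)" "c * (c + 1) * (F / (c * (c + 1))) = F"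
    using c by simp_all
  ultimately have "x * (c + x) * U = exp x - F - x * F / (c + 1)"
    by (simp add: algebra_simps)
  then have "U = (exp x - F - x * F / (c + 1)) / (x * (c + x))"
    using c x by (simp add: eq_divide_eq mult.commute)
  then show ?thesis using sU unfolding P2_def F_def by simp
qed

definition moment_series_term :: "real \<Rightarrow> real \<Rightarrow> real \<Rightarrow> real \<Rightarrow> real \<Rightarrow> nat \<Rightarrow> real" where
  "moment_series_term A x p B m n =
     exp (- x) * (p / ((A + n) * (A + n + 1)) + B / ((A + n + 1) * (A + n + 2))
                  + m / ((A + n + 2) * (A + n + 3))) * (x ^ n / fact n)"

(* The right-hand side of the theorem, with A = \<alpha>\<^sup>+, p = \<alpha>1 \<alpha>2, B = \<alpha>1 \<mu>2 + \<alpha>2 \<mu>1 and m = \<mu>1 \<mu>2. *)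
definition moment_closed_form :: "real \<Rightarrow> real \<Rightarrow> real \<Rightarrow> real \<Rightarrow> real \<Rightarrow> real" where
  "moment_closed_form A x p B m =
     p / pochhammer A 2 * exp (- x) * hyp1F1 A (A + 2) x
     + 1 / (A + 2) * (B / (A + 1) - m / (A + 1 + x)) * exp (- x) * hyp1F1 (A + 1) (A + 3) x
     + m / (x * (A + 1 + x)) * (1 - exp (- x) * hyp1F1 (A + 1) (A + 3) x)"

lemma moment_series_term_nonneg:
  "A > 0 \<Longrightarrow> x \<ge> 0 \<Longrightarrow> p \<ge> 0 \<Longrightarrow> B \<ge> 0 \<Longrightarrow> m \<ge> 0 \<Longrightarrow> 0 \<le> moment_series_term A x p B m n"
  unfolding moment_series_term_def by (simp add: add_pos_nonneg)

lemma sums_moment_series: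
  fixes A x :: real
  assumes A: "A > 0" and x: "x > 0"
  shows "moment_series_term A x p B m sums moment_closed_form A x p B m"
proof -
  define F0 where "F0 = hyp1F1 A (A + 2) x"
  define F1 where "F1 = hyp1F1 (A + 1) (A + 3) x"
  let ?e = "\<lambda>n. x ^ n / fact n"
  have "(\<lambda>n. 1 / ((A + real n) * (A + real n + 1)) * ?e n) sums (F0 / (A * (A + 1)))"
    unfolding F0_def using A x by (intro sums_hyp1F1_add2) auto
  moreover have "(\<lambda>n. 1 / ((A + 1 + real n) * (A + 1 + real n + 1)) * ?e n) sums (F1 / ((A + 1) * (A + 2)))"
    using sums_hyp1F1_add2[of "A + 1" x] A x unfolding F1_def by (simp add: add.assoc)
  moreover have "(\<lambda>n. 1 / ((A + 1 + real n + 1) * (A + 1 + real n + 2)) * ?e n) sums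
      ((exp x - F1 - x * F1 / (A + 2)) / (x * (A + 1 + x)))"
    using sums_hyp1F1_contiguous[of "A + 1" x] A x unfolding F1_def by (simp add: add.assoc)
  ultimately have "(\<lambda>n. exp (- x) * p * (1 / ((A + real n) * (A + real n + 1)) * ?e n)
      + exp (- x) * B * (1 / ((A + 1 + real n) * (A + 1 + real n + 1)) * ?e n)
      + exp (- x) * m * (1 / ((A + 1 + real n + 1) * (A + 1 + real n + 2)) * ?e n))
      sums (exp (- x) * p * (F0 / (A * (A + 1))) + exp (- x) * B * (F1 / ((A + 1) * (A + 2)))
            + exp (- x) * m * ((exp x - F1 - x * F1 / (A + 2)) / (x * (A + 1 + x))))"
    by (intro sums_add sums_mult)
  moreover have "exp (- x) * p * (F0 / (A * (A + 1))) + exp (- x) * B * (F1 / ((A + 1) * (A + 2)))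
            + exp (- x) * m * ((exp x - F1 - x * F1 / (A + 2)) / (x * (A + 1 + x)))
      = moment_closed_form A x p B m"
  proof -
    have gen: "E * p * (F0 / P) + E * B * (F1 / (A1 * K)) + E * m * ((1 / E - F1 - x * F1 / K) / (x * D))
        = p / P * E * F0 + 1 / K * (B / A1 - m / D) * E * F1 + m / (x * D) * (1 - E * F1)"
      if "E \<noteq> 0" "P \<noteq> 0" "A1 \<noteq> 0" "K \<noteq> 0" "D \<noteq> 0" "x \<noteq> 0" for E P A1 K D :: real
      using that by (simp add: field_simps)
    have e: "pochhammer A 2 = A * (A + 1)" "exp x = 1 / exp (- x)"
      by (simp_all add: pochhammer_Suc numeral_2_eq_2 exp_minus divide_inverse)
    show ?thesis
      unfolding moment_closed_form_def F0_def[symmetric] F1_def[symmetric] e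
      by (intro gen) (use A x in auto)
  qed
  ultimately show ?thesis
    unfolding moment_series_term_def by (simp add: algebra_simps)
qed

lemma moment_closed_form_nonneg:
  "A > 0 \<Longrightarrow> x > 0 \<Longrightarrow> p \<ge> 0 \<Longrightarrow> B \<ge> 0 \<Longrightarrow> m \<ge> 0 \<Longrightarrow> 0 \<le> moment_closed_form A x p B m"
  using sums_le[OF moment_series_term_nonneg sums_zero sums_moment_series] by simp

section \<open>Laplace representation of the product moment\<close>

definition laplace_series_term :: "real \<Rightarrow> real \<Rightarrow> real \<Rightarrow> real \<Rightarrow> real \<Rightarrow> nat \<Rightarrow> real \<Rightarrow> real" where
  "laplace_series_term A x p B m n t =
     4 * exp (- x) * t * (1 + 2*t) powr (-(A + 2))
     * (p + B * inverse (1 + 2*t) + m * inverse (1 + 2*t) ^ 2) * ((x * inverse (1 + 2*t)) ^ n / fact n)"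

lemma sums_laplace_series_term:
  fixes a1 a2 a3 l1 l2 l3 t :: real
  assumes t: "t \<ge> 0"
  shows "(\<lambda>n. laplace_series_term (a1 + a2 + a3) ((l1 + l2 + l3) / 2) (a1 * a2) (a1 * (l2 / 2) + a2 * (l1 / 2))
                  (l1 / 2 * (l2 / 2)) n t)
         sums (t * ncchi2_laplace_moment a1 l1 t * ncchi2_laplace_moment a2 l2 t * ncchi2_laplace a3 l3 t)"
proof -
  define w where "w = 1 + 2*t"
  have w: "w > 0" using t by (simp add: w_def)
  let ?x = "(l1 + l2 + l3) / 2"
  have "w powr (-(a1 + 1)) * w powr (-(a2 + 1)) * w powr (-a3) = w powr (-((a1 + a2 + a3) + 2))"
    unfolding powr_add[symmetric] by (rule arg_cong[where f = "\<lambda>e. w powr e"]) simp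
  moreover have "exp (- l1 / 2) * exp (- l2 / 2) * exp (- l3 / 2) = exp (- ?x)"
    unfolding exp_add[symmetric] by (simp add: field_simps)
  moreover have "exp (l1 / 2 / w) * exp (l2 / 2 / w) * exp (l3 / 2 / w) = exp (?x * inverse w)"
    unfolding exp_add[symmetric] using w by (simp add: field_simps)
  moreover have "(a1 + l1 / 2 / w) * (a2 + l2 / 2 / w)
     = a1 * a2 + (a1 * (l2 / 2) + a2 * (l1 / 2)) * inverse w + l1 / 2 * (l2 / 2) * inverse w ^ 2"
    using w by (simp add: field_simps power2_eq_square)
  moreover have "t * (2 * E1 * W1 * (Q1 * X1)) * (2 * E2 * W2 * (Q2 * X2)) * (E3 * W3 * X3)
      = 4 * (E1 * E2 * E3) * t * (W1 * W2 * W3) * (Q1 * Q2) * (X1 * X2 * X3)"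
    for E1 E2 E3 W1 W2 W3 Q1 Q2 X1 X2 X3 :: real
    by (simp add: mult_ac)
  ultimately have "t * ncchi2_laplace_moment a1 l1 t * ncchi2_laplace_moment a2 l2 t * ncchi2_laplace a3 l3 t
     = 4 * exp (- ?x) * t * w powr (-((a1 + a2 + a3) + 2))
       * (a1 * a2 + (a1 * (l2 / 2) + a2 * (l1 / 2)) * inverse w + l1 / 2 * (l2 / 2) * inverse w ^ 2)
       * exp (?x * inverse w)"
    unfolding ncchi2_laplace_moment_def ncchi2_laplace_def w_def[symmetric] by (simp only:)
  then show ?thesis
    unfolding laplace_series_term_def w_def[symmetric] by (simp only: sums_mult sums_exp_real)
qed

lemma laplace_series_term_eq:
  fixes A x p B m t :: real and n :: nat
  assumes t: "t \<ge> 0"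
  defines "g \<equiv> \<lambda>k. t * (1 + 2*t) powr (-((A + real (n + k)) + 2))"
  shows "laplace_series_term A x p B m n t = 4 * exp (- x) * x ^ n / fact n * (p * g 0 + B * g 1 + m * g 2)"
proof -
  define v where "v = inverse (1 + 2*t)"
  have pw: "(1 + 2*t) powr (-((A + real (n + k)) + 2)) = (1 + 2*t) powr (-(A + 2)) * v ^ (n + k)" for k
    using powr_minus_add_of_nat[of "1 + 2*t" "A + 2" "n + k"] t unfolding v_def by (simp add: add_ac)
  show ?thesis
    unfolding laplace_series_term_def g_def v_def[symmetric] pw
    by (simp add: power_mult_distrib power_add algebra_simps power2_eq_square)
qed

lemma nn_integral_lincomb3:
  fixes f g h :: "'a \<Rightarrow> ennreal"
  assumes "f \<in> borel_measurable M" "g \<in> borel_measurable M" "h \<in> borel_measurable M"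
  shows "(\<integral>\<^sup>+t. a * f t + b * g t + c * h t \<partial>M) = a * integral\<^sup>N M f + b * integral\<^sup>N M g + c * integral\<^sup>N M h"
  using assms by (simp add: nn_integral_add nn_integral_cmult)

lemma nn_integral_laplace_series_term:
  fixes A x p B m :: real
  assumes A: "A > 0" and x: "x \<ge> 0" and p: "p \<ge> 0" and B: "B \<ge> 0" and m: "m \<ge> 0"
  shows "(\<integral>\<^sup>+t. ennreal (laplace_series_term A x p B m n t) * indicator {0..} t \<partial>lborel)
       = ennreal (moment_series_term A x p B m n)"
proof -
  define K where "K = 4 * exp (- x) * x ^ n / fact n"
  have K: "K \<ge> 0" unfolding K_def using x by simp
  define f where "f = (\<lambda>k t. ennreal (t * (1 + 2*t) powr (-((A + real (n + k)) + 2))) * indicator {0..} t)"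
  have "ennreal (laplace_series_term A x p B m n t) * indicator {0..} t
      = ennreal (K * p) * f 0 t + ennreal (K * B) * f 1 t + ennreal (K * m) * f 2 t" for t
  proof (cases "t \<ge> 0")
    case True
    then show ?thesis
      unfolding laplace_series_term_eq[OF True] f_def K_def[symmetric] using K p B m
      by (simp add: distrib_left ennreal_lincomb3[symmetric] mult.assoc)
  qed (simp add: f_def)
  moreover have "f k \<in> borel_measurable lborel" for k
    unfolding f_def by measurable
  ultimately have "(\<integral>\<^sup>+t. ennreal (laplace_series_term A x p B m n t) * indicator {0..} t \<partial>lborel)
      = ennreal (K * p) * integral\<^sup>N lborel (f 0) + ennreal (K * B) * integral\<^sup>N lborel (f 1)
        + ennreal (K * m) * integral\<^sup>N lborel (f 2)"
    by (simp only: nn_integral_lincomb3)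
  also have "\<dots> = ennreal (K * p * (1 / (4 * ((A + n) * (A + n + 1))))
                        + K * B * (1 / (4 * ((A + n + 1) * (A + n + 2))))
                        + K * m * (1 / (4 * ((A + n + 2) * (A + n + 3)))))"
  proof -
    have "integral\<^sup>N lborel (f k) = ennreal (1 / (4 * ((A + real (n + k)) * (A + real (n + k) + 1))))" for k
      unfolding f_def using A by (intro nn_integral_t_mult_powr) simp
    then show ?thesis
      using A K p B m by (subst ennreal_lincomb3) (simp_all add: add_pos_nonneg algebra_simps)
  qed
  also have "\<dots> = ennreal (moment_series_term A x p B m n)"
  proof -
    have "4 * E * X / F * p * (1 / (4 * D0)) + 4 * E * X / F * B * (1 / (4 * D1))
          + 4 * E * X / F * m * (1 / (4 * D2)) = E * (p / D0 + B / D1 + m / D2) * (X / F)"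
      for E X F D0 D1 D2 :: real
      by (simp add: algebra_simps)
    then show ?thesis unfolding moment_series_term_def K_def by simp
  qed
  finally show ?thesis .
qed

lemma nn_integral_laplace_product:
  fixes a1 a2 a3 l1 l2 l3 :: real
  assumes a1: "a1 > 0" and a2: "a2 > 0" and a3: "a3 > 0"
    and l1: "l1 \<ge> 0" and l2: "l2 \<ge> 0" and l3: "l3 \<ge> 0" and l: "l1 + l2 + l3 > 0"
  shows "(\<integral>\<^sup>+t. ennreal t * indicator {0..} t * (ennreal (ncchi2_laplace_moment a1 l1 t)
              * ennreal (ncchi2_laplace_moment a2 l2 t) * ennreal (ncchi2_laplace a3 l3 t)) \<partial>lborel)
       = ennreal (moment_closed_form (a1 + a2 + a3) ((l1 + l2 + l3) / 2)
                    (a1 * a2) (a1 * (l2 / 2) + a2 * (l1 / 2)) (l1 / 2 * (l2 / 2)))"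
proof -
  define A where "A = a1 + a2 + a3"
  define x where "x = (l1 + l2 + l3) / 2"
  define p where "p = a1 * a2"
  define B where "B = a1 * (l2 / 2) + a2 * (l1 / 2)"
  define m where "m = l1 / 2 * (l2 / 2)"
  have A: "A > 0" and x: "x > 0" and p: "p \<ge> 0" and B: "B \<ge> 0" and m: "m \<ge> 0"
    unfolding A_def x_def p_def B_def m_def using a1 a2 a3 l1 l2 l by simp_all
  have "ennreal t * indicator {0..} t * (ennreal (ncchi2_laplace_moment a1 l1 t)
              * ennreal (ncchi2_laplace_moment a2 l2 t) * ennreal (ncchi2_laplace a3 l3 t))
      = (\<Sum>n. ennreal (laplace_series_term A x p B m n t) * indicator {0..} t)" for t
  proof (cases "t \<ge> 0")
    case True
    have "0 \<le> laplace_series_term A x p B m n t" for n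
      unfolding laplace_series_term_def using True x p B m by simp
    then have "(\<Sum>n. ennreal (laplace_series_term A x p B m n t))
        = ennreal (t * ncchi2_laplace_moment a1 l1 t * ncchi2_laplace_moment a2 l2 t * ncchi2_laplace a3 l3 t)"
      using sums_laplace_series_term[OF True, of a1 a2 a3 l1 l2 l3]
      unfolding A_def x_def p_def B_def m_def by (rule ennreal_suminf_sums)
    moreover have "0 \<le> ncchi2_laplace_moment a l t" if "a \<ge> 0" "l \<ge> 0" for a l
      unfolding ncchi2_laplace_moment_def using that True by simp
    ultimately show ?thesis
      using True a1 a2 l1 l2 by (simp add: ncchi2_laplace_def ennreal_mult mult.assoc)
  qed simp
  then have "(\<integral>\<^sup>+t. ennreal t * indicator {0..} t * (ennreal (ncchi2_laplace_moment a1 l1 t)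
              * ennreal (ncchi2_laplace_moment a2 l2 t) * ennreal (ncchi2_laplace a3 l3 t)) \<partial>lborel)
      = (\<integral>\<^sup>+t. (\<Sum>n. ennreal (laplace_series_term A x p B m n t) * indicator {0..} t) \<partial>lborel)"
    by (simp only:)
  also have "\<dots> = (\<Sum>n. \<integral>\<^sup>+t. ennreal (laplace_series_term A x p B m n t) * indicator {0..} t \<partial>lborel)"
    by (rule nn_integral_suminf) (unfold laplace_series_term_def, measurable)
  also have "\<dots> = (\<Sum>n. ennreal (moment_series_term A x p B m n))"
    using A x p B m by (simp add: nn_integral_laplace_series_term)
  also have "\<dots> = ennreal (moment_closed_form A x p B m)"
    using A x p B m by (intro ennreal_suminf_sums moment_series_term_nonneg sums_moment_series) auto
  finally show ?thesis unfolding A_def x_def p_def B_def m_def .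
qed

lemma ennreal_ratio_eq_nn_integral_laplace:
  fixes y0 y1 y2 :: real
  assumes y: "y0 > 0" "y1 > 0" "y2 > 0"
  shows "ennreal (y0 / (y0 + y1 + y2) * (y1 / (y0 + y1 + y2)))
       = (\<integral>\<^sup>+t. ennreal t * indicator {0..} t * (ennreal (y0 * exp (-(t * y0)))
              * ennreal (y1 * exp (-(t * y1))) * ennreal (exp (-(t * y2)))) \<partial>lborel)"
proof -
  define S where "S = y0 + y1 + y2"
  have S: "S > 0" using y by (simp add: S_def)
  have "ennreal t * indicator {0..} t * (ennreal (y0 * exp (-(t * y0)))
              * ennreal (y1 * exp (-(t * y1))) * ennreal (exp (-(t * y2))))
      = ennreal (y0 * y1) * (ennreal (t * exp (-(t * S))) * indicator {0..} t)" for t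
  proof (cases "t \<ge> 0")
    case True
    have "exp (-(t * S)) = exp (-(t * y0)) * exp (-(t * y1)) * exp (-(t * y2))"
      unfolding S_def exp_add[symmetric] by (simp add: algebra_simps)
    then show ?thesis using True y by (simp add: ennreal_mult[symmetric] mult_ac)
  qed simp
  then have "(\<integral>\<^sup>+t. ennreal t * indicator {0..} t * (ennreal (y0 * exp (-(t * y0)))
              * ennreal (y1 * exp (-(t * y1))) * ennreal (exp (-(t * y2)))) \<partial>lborel)
      = ennreal (y0 * y1) * ennreal (1 / S^2)"
    using S by (simp add: nn_integral_cmult nn_integral_mult_exp)
  also have "\<dots> = ennreal (y0 / S * (y1 / S))"
    using y by (simp add: ennreal_mult[symmetric] power2_eq_square)
  finally show ?thesis unfolding S_def ..
qed

lemma nn_integral_PiM3_prod: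
  fixes M :: "nat \<Rightarrow> 'a measure"
  assumes "\<And>i. sigma_finite_measure (M i)"
    and f0: "f0 \<in> borel_measurable (M 0)" and f1: "f1 \<in> borel_measurable (M 1)"
    and f2: "f2 \<in> borel_measurable (M 2)"
  shows "(\<integral>\<^sup>+y. f0 (y 0) * f1 (y 1) * f2 (y 2) \<partial>Pi\<^sub>M {0, 1, 2} M)
       = integral\<^sup>N (M 0) f0 * integral\<^sup>N (M 1) f1 * integral\<^sup>N (M 2) f2"
proof -
  interpret product_sigma_finite M
    using assms(1) by (rule product_sigma_finite.intro)
  define f where "f = (\<lambda>i::nat. if i = 0 then f0 else if i = 1 then f1 else f2)"
  have "i \<in> {0, 1, 2} \<Longrightarrow> f i \<in> borel_measurable (M i)" for i
    using f0 f1 f2 by (auto simp: f_def)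
  then have "(\<integral>\<^sup>+y. (\<Prod>i\<in>{0, 1, 2}. f i (y i)) \<partial>Pi\<^sub>M {0, 1, 2} M) = (\<Prod>i\<in>{0, 1, 2}. integral\<^sup>N (M i) (f i))"
    by (intro product_nn_integral_prod) auto
  then show ?thesis by (simp add: f_def mult.assoc)
qed

lemma AE_PiM_ncchi2_pos:
  fixes a1 a2 a3 l1 l2 l3 :: real
  assumes "a1 > 0" "a2 > 0" "a3 > 0" "l1 \<ge> 0" "l2 \<ge> 0" "l3 \<ge> 0"
  shows "AE y in Pi\<^sub>M {0::nat, 1, 2} (\<lambda>i. ncchi2 ([a1, a2, a3] ! i) ([l1, l2, l3] ! i)).
           y 0 > 0 \<and> y 1 > 0 \<and> y 2 > 0"
proof -
  have "AE y in Pi\<^sub>M {0::nat, 1, 2} (\<lambda>i. ncchi2 ([a1, a2, a3] ! i) ([l1, l2, l3] ! i)). y i > 0"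
    if "i \<in> {0, 1, 2}" for i
    using assms that by (intro AE_PiM_component) (auto simp: prob_space_ncchi2 AE_ncchi2_pos)
  then show ?thesis by (auto simp: eventually_conj_iff)
qed

lemma nn_integral_PiM_ncchi2_laplace:
  fixes a1 a2 a3 l1 l2 l3 t :: real
  assumes a1: "a1 > 0" and a2: "a2 > 0" and a3: "a3 > 0"
    and l1: "l1 \<ge> 0" and l2: "l2 \<ge> 0" and l3: "l3 \<ge> 0" and t: "t \<ge> 0"
  shows "(\<integral>\<^sup>+y. ennreal (y 0 * exp (-(t * y 0))) * ennreal (y 1 * exp (-(t * y 1))) * ennreal (exp (-(t * y 2)))
            \<partial>Pi\<^sub>M {0, 1, 2} (\<lambda>i. ncchi2 ([a1, a2, a3] ! i) ([l1, l2, l3] ! i)))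
       = ennreal (ncchi2_laplace_moment a1 l1 t) * ennreal (ncchi2_laplace_moment a2 l2 t) * ennreal (ncchi2_laplace a3 l3 t)"
proof -
  define M where "M = (\<lambda>i::nat. ncchi2 ([a1, a2, a3] ! i) ([l1, l2, l3] ! i))"
  have "(\<lambda>u. ennreal (u * exp (-(t * u)))) \<in> borel_measurable borel"
    "(\<lambda>u. ennreal (exp (-(t * u)))) \<in> borel_measurable borel"
    by (intro measurable_compose[OF _ measurable_ennreal] borel_measurable_continuous_onI continuous_intros)+
  then have "(\<lambda>u. ennreal (u * exp (-(t * u)))) \<in> borel_measurable (M i)"
    "(\<lambda>u. ennreal (exp (-(t * u)))) \<in> borel_measurable (M i)" for i
    unfolding measurable_cong_sets[OF _ refl, of "M i" borel] by (simp_all add: M_def sets_ncchi2)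
  then have "(\<integral>\<^sup>+y. ennreal (y 0 * exp (-(t * y 0))) * ennreal (y 1 * exp (-(t * y 1)))
                * ennreal (exp (-(t * y 2))) \<partial>Pi\<^sub>M {0, 1, 2} M)
      = (\<integral>\<^sup>+u. ennreal (u * exp (-(t * u))) \<partial>M 0) * (\<integral>\<^sup>+u. ennreal (u * exp (-(t * u))) \<partial>M 1)
        * (\<integral>\<^sup>+u. ennreal (exp (-(t * u))) \<partial>M 2)"
    by (intro nn_integral_PiM3_prod) (simp_all add: M_def sigma_finite_ncchi2)
  then show ?thesis
    using assms by (simp add: M_def nn_integral_ncchi2_exp nn_integral_ncchi2_mult_exp)
qed

lemma nn_integral_ncchi2_product_ratio:
  fixes a1 a2 a3 l1 l2 l3 :: real
  assumes a1: "a1 > 0" and a2: "a2 > 0" and a3: "a3 > 0"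
    and l1: "l1 \<ge> 0" and l2: "l2 \<ge> 0" and l3: "l3 \<ge> 0" and l: "l1 + l2 + l3 > 0"
  defines "M \<equiv> \<lambda>i::nat. ncchi2 ([a1, a2, a3] ! i) ([l1, l2, l3] ! i)"
  shows "(\<integral>\<^sup>+y. ennreal (y 0 / (y 0 + y 1 + y 2) * (y 1 / (y 0 + y 1 + y 2))) \<partial>Pi\<^sub>M {0, 1, 2} M)
       = ennreal (moment_closed_form (a1 + a2 + a3) ((l1 + l2 + l3) / 2)
                    (a1 * a2) (a1 * (l2 / 2) + a2 * (l1 / 2)) (l1 / 2 * (l2 / 2)))"
proof -
  let ?P = "Pi\<^sub>M {0::nat, 1, 2} M"
  let ?K = "\<lambda>t (y::nat \<Rightarrow> real). ennreal (y 0 * exp (-(t * y 0))) * ennreal (y 1 * exp (-(t * y 1)))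
              * ennreal (exp (-(t * y 2)))"
  have sets_M[measurable_cong]: "sets (M i) = sets borel" for i by (simp add: M_def sets_ncchi2)
  interpret product_sigma_finite M
    by (intro product_sigma_finite.intro) (simp add: M_def sigma_finite_ncchi2)
  interpret F: finite_product_sigma_finite M "{0::nat, 1, 2}" by standard simp
  interpret PS: pair_sigma_finite lborel ?P
    by (intro pair_sigma_finite.intro sigma_finite_lborel F.sigma_finite_measure_axioms)
  have "AE y in ?P. y 0 > 0 \<and> y 1 > 0 \<and> y 2 > 0"
    unfolding M_def using a1 a2 a3 l1 l2 l3 by (rule AE_PiM_ncchi2_pos)
  then have "AE y in ?P. ennreal (y 0 / (y 0 + y 1 + y 2) * (y 1 / (y 0 + y 1 + y 2)))
                         = (\<integral>\<^sup>+t. ennreal t * indicator {0..} t * ?K t y \<partial>lborel)"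
    by eventually_elim (rule ennreal_ratio_eq_nn_integral_laplace, simp_all)
  then have "(\<integral>\<^sup>+y. ennreal (y 0 / (y 0 + y 1 + y 2) * (y 1 / (y 0 + y 1 + y 2))) \<partial>?P)
      = (\<integral>\<^sup>+y. (\<integral>\<^sup>+t. ennreal t * indicator {0..} t * ?K t y \<partial>lborel) \<partial>?P)"
    by (rule nn_integral_cong_AE)
  also have "\<dots> = (\<integral>\<^sup>+t. (\<integral>\<^sup>+y. ennreal t * indicator {0..} t * ?K t y \<partial>?P) \<partial>lborel)"
    by (rule PS.Fubini') measurable
  also have "\<dots> = (\<integral>\<^sup>+t. ennreal t * indicator {0..} t * (ennreal (ncchi2_laplace_moment a1 l1 t)
              * ennreal (ncchi2_laplace_moment a2 l2 t) * ennreal (ncchi2_laplace a3 l3 t)) \<partial>lborel)"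
  proof (rule nn_integral_cong)
    fix t :: real
    have "?K t \<in> borel_measurable ?P" by measurable
    then show "(\<integral>\<^sup>+y. ennreal t * indicator {0..} t * ?K t y \<partial>?P) = ennreal t * indicator {0..} t
        * (ennreal (ncchi2_laplace_moment a1 l1 t) * ennreal (ncchi2_laplace_moment a2 l2 t)
           * ennreal (ncchi2_laplace a3 l3 t))"
      using nn_integral_PiM_ncchi2_laplace[OF a1 a2 a3 l1 l2 l3, of t]
      by (cases "t \<ge> 0") (simp_all add: nn_integral_cmult M_def)
  qed
  also have "\<dots> = ennreal (moment_closed_form (a1 + a2 + a3) ((l1 + l2 + l3) / 2)
                    (a1 * a2) (a1 * (l2 / 2) + a2 * (l1 / 2)) (l1 / 2 * (l2 / 2)))"
    by (rule nn_integral_laplace_product[OF a1 a2 a3 l1 l2 l3 l])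
  finally show ?thesis .
qed

theorem mainTheorem5:
  fixes a1 a2 a3 l1 l2 l3 :: real
  assumes "a1 > 0" "a2 > 0" "a3 > 0"
    and "l1 \<ge> 0" "l2 \<ge> 0" "l3 \<ge> 0"
    and "l1 + l2 + l3 > 0"
  shows "(let ap = a1 + a2 + a3; x = (l1 + l2 + l3) / 2; m1 = l1 / 2; m2 = l2 / 2 in
          (\<integral>p. fst p * snd p \<partial>NcDir2 a1 a2 a3 l1 l2 l3) =
            a1 * a2 / pochhammer ap 2 * exp (- x) * hyp1F1 ap (ap + 2) x
          + 1 / (ap + 2) * ((a1 * m2 + a2 * m1) / (ap + 1) - m1 * m2 / (ap + 1 + x))
              * exp (- x) * hyp1F1 (ap + 1) (ap + 3) x
          + m1 * m2 / (x * (ap + 1 + x)) * (1 - exp (- x) * hyp1F1 (ap + 1) (ap + 3) x))"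
proof -
  define M where "M = (\<lambda>i::nat. ncchi2 ([a1, a2, a3] ! i) ([l1, l2, l3] ! i))"
  define C where "C = moment_closed_form (a1 + a2 + a3) ((l1 + l2 + l3) / 2)
                        (a1 * a2) (a1 * (l2 / 2) + a2 * (l1 / 2)) (l1 / 2 * (l2 / 2))"
  let ?r = "\<lambda>y::nat \<Rightarrow> real. y 0 / (y 0 + y 1 + y 2) * (y 1 / (y 0 + y 1 + y 2))"
  have sets_M[measurable_cong]: "sets (M i) = sets borel" for i by (simp add: M_def sets_ncchi2)
  have "(\<integral>p. fst p * snd p \<partial>NcDir2 a1 a2 a3 l1 l2 l3) = (\<integral>y. ?r y \<partial>Pi\<^sub>M {0, 1, 2} M)"
  proof -
    have "(\<lambda>p::real \<times> real. fst p * snd p) \<in> borel_measurable borel"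
      by (intro borel_measurable_continuous_onI continuous_intros)
    then show ?thesis unfolding NcDir2_def M_def[symmetric] by (subst integral_distr) auto
  qed
  also have "\<dots> = enn2real (\<integral>\<^sup>+y. ennreal (?r y) \<partial>Pi\<^sub>M {0, 1, 2} M)"
  proof (rule integral_eq_nn_integral)
    show "AE y in Pi\<^sub>M {0, 1, 2} M. 0 \<le> ?r y"
      using AE_PiM_ncchi2_pos[OF assms(1-6)] unfolding M_def by eventually_elim simp
  qed measurable
  also have "\<dots> = C"
    using nn_integral_ncchi2_product_ratio[OF assms] moment_closed_form_nonneg assms
    unfolding M_def C_def by (simp add: add_pos_pos)
  finally show ?thesis unfolding C_def moment_closed_form_def Let_def by (simp add: ac_simps)
qed

end
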